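(* Let $\alpha=(\alpha_1,\ldots,\alpha_n)$ be a composition, $\sigma\in S_n$, $i\in\{1,\ldots,n-1\}$ with $\alpha_i=\alpha_{i+1}$, and $\beta$ a composition of length $n$. Then the restrictions $P_i:\mathrm{NAF}(\alpha,\sigma,\beta)\times\mathrm{NAF}(\alpha,\sigma s_i,\beta)\to\mathbb{Q}(q,t)$ and $P_i:\mathrm{NAF}(\alpha,\sigma s_i,\beta)\times\mathrm{NAF}(\alpha,\sigma,\beta)\to\mathbb{Q}(q,t)$ form a probabilistic bijection between $\mathrm{NAF}(\alpha,\sigma,\beta)$ and $\mathrm{NAF}(\alpha,\sigma s_i,\beta)$ with respect to the weight $\mathrm{wt}_{q,t}$.
   Context: Permutations are in one-line notation; $\sigma s_i$ is $\sigma$ with the entries in positions $i,i+1$ exchanged. A composition is a sequence of nonnegative integers. The skyline diagram is $\mathrm{dg}(\alpha)=\{(j,r):1\le j\le n,\ 1\le r\le\alpha_j\}$ ($j$ = column, $r$ = row) and the augmented diagram is $\mathrm{adg}(\alpha)=\mathrm{dg}(\alpha)\cup\{(j,0):1\le j\le n\}$ (row $0$ is the basement). For $u=(j,r)\in\mathrm{dg}(\alpha)$: $\mathrm{south}(u)=(j,r-1)$; $\mathrm{leg}(u)=\alpha_j-r$; the left arm set is $\{(j',r-1)\in\mathrm{adg}(\alpha):j'<j,\ \alpha_{j'}<\alpha_j\}$, the right arm set is $\{(j',r)\in\mathrm{dg}(\alpha):j'>j,\ \alpha_{j'}\le\alpha_j\}$, $\mathrm{Arm}(u)$ is their union and $\mathrm{arm}(u)=|\mathrm{Arm}(u)|$.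 Two boxes of $\mathrm{adg}(\alpha)$ attack each other if they are in the same row, or in consecutive rows with the box in the higher row strictly to the right of the box in the lower row. A filling of shape $\alpha$ and basement $\tau\in S_n$ is a map $T:\mathrm{adg}(\alpha)\to\{1,\ldots,n\}$ with $T(j,0)=\tau_j$; $\mathrm{NAF}(\alpha,\tau)$ is the set of non-attacking ones (attacking boxes have distinct entries). The content of $T$ is $(\beta_1,\ldots,\beta_n)$ with $\beta_k=|\{u\in\mathrm{dg}(\alpha):T(u)=k\}|$ (basement boxes not counted); $\mathrm{NAF}(\alpha,\tau,\beta)$ is the set of non-attacking fillings with content $\beta$. For integers $a,b$ let $\chi(a,b)=1$ if $a>b$ and $0$ otherwise, and $\chi(a,b,c)=\chi(a,b)+\chi(b,c)-\chi(a,c)$. For $T$ non-attacking: a descent is $u\in\mathrm{dg}(\alpha)$ with $T(u)>T(\mathrm{south}(u))$, $\mathrm{maj}(T)=\sum_{u\text{ descent}}(\mathrm{leg}(u)+1)$; a triple is $(u,v,w)$ with $u\in\mathrm{dg}(\alpha)$, $w=\mathrm{south}(u)$, $v\in\mathrm{Arm}(u)$, an inversion triple if $\chi(T(u),T(v),T(w))=1$ and a coinversion triple otherwise; $\mathrm{coinv}(T)$ is the number of coinversion triples; $\mathrm{wt}_{q,t}(T)=q^{\mathrm{maj}(T)}t^{\mathrm{coinv}(T)}\prod_{u\in\mathrm{dg}(\alpha),\,T(u)\ne T(\mathrm{south}(u))}\frac{1-t}{1-q^{1+\mathrm{leg}(u)}t^{1+\mathrm{arm}(u)}}$. Fix $i$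 with $\alpha_i=\alpha_{i+1}$. For a filling $T$ and $0\le r\le\alpha_i$, $\mathrm{swap}_r(T)$ exchanges the entries of boxes $(i,r)$ and $(i+1,r)$, and $\Omega_{0,h}=\mathrm{swap}_h\circ\cdots\circ\mathrm{swap}_0$. For $T\in\mathrm{NAF}(\alpha,\tau)$ and $0\le r\le\alpha_i-1$, let $a=T(i,r)$, $b=T(i+1,r)$, $c=T(i,r+1)$, $d=T(i+1,r+1)$, $A=\mathrm{arm}(i+1,r+1)$, $\ell=\mathrm{leg}(i+1,r+1)$, and define $\rho_r(T)$: if $a,b,c,d$ are distinct, $\rho_r(T)=0$ when $\chi(c,d,a)=\chi(c,d,b)$ and $1$ when $\chi(c,d,a)=\chi(d,c,b)$; if exactly three are distinct, $\rho_r(T)=0$ if $b=c$, $1$ if $b=d$, and $t^{1-\chi(d,a,b)}\frac{1-q^{\ell+1}t^{A+1}}{1-q^{\ell+1}t^{A+2}}$ if $a=c$; if $a=c$ and $b=d$, $\rho_r(T)=1$; and $\rho_{\alpha_i}(T)=0$. For $T\in\mathrm{NAF}(\alpha,\tau)$ and a filling $U$ with basement $\tau s_i$, $P_i(T,U)=\left(\prod_{r=0}^{h-1}\rho_r(T)\right)(1-\rho_h(T))$ if $U=\Omega_{0,h}(T)$ for some $h\in\{0,\ldots,\alpha_i\}$ and $0$ otherwise (used with $\tau=\sigma$ and $\tau=\sigma s_i$). A probabilistic bijection between $(\mathbf{T},\mathrm{wt})$ and $(\mathbf{U},\mathrm{wt})$ is a pair $P_{\mathbf{T}}:\mathbf{T}\times\mathbf{U}\to\mathbb{Q}(q,t)$,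 $P_{\mathbf{U}}:\mathbf{U}\times\mathbf{T}\to\mathbb{Q}(q,t)$ with $\sum_UP_{\mathbf{T}}(T,U)=1$ for all $T$, $\sum_TP_{\mathbf{U}}(U,T)=1$ for all $U$, and $\mathrm{wt}(T)P_{\mathbf{T}}(T,U)=\mathrm{wt}(U)P_{\mathbf{U}}(U,T)$ for all $T,U$. *)

theory Defs
  imports "HOL-Computational_Algebra.Polynomial" "HOL-Computational_Algebra.Fraction_Field"
begin

text \<open>The field Q(q,t): fraction field of Q[q][t] (outer polynomial variable t,
  coefficients polynomials in q over the rationals).\<close>
type_synonym qt = "rat poly poly fract"

definition qv :: qt where "qv = Fract [:[:0, 1:]:] 1"
definition tv :: qt where "tv = Fract [:0, 1:] 1"

text \<open>Compositions are lists; entries are 1-indexed: col alpha j = alpha_j.\<close>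
definition col :: "nat list \<Rightarrow> nat \<Rightarrow> nat" where
  "col xs j = xs ! (j - 1)"

text \<open>Permutations in S_n in one-line notation (lists of 1..n).\<close>
definition is_perm :: "nat \<Rightarrow> nat list \<Rightarrow> bool" where
  "is_perm n s \<longleftrightarrow> distinct s \<and> set s = {1..n}"

definition perm_si :: "nat list \<Rightarrow> nat \<Rightarrow> nat list" where
  "perm_si s i = s[i - 1 := s ! i, i := s ! (i - 1)]"

text \<open>Boxes are (column, row).\<close>
definition dg :: "nat list \<Rightarrow> (nat \<times> nat) set" where
  "dg a = {(j, r). 1 \<le> j \<and> j \<le> length a \<and> 1 \<le> r \<and> r \<le> col a j}"

definition adg :: "nat list \<Rightarrow> (nat \<times> nat) set" where
  "adg a = dg a \<union> {(j, 0) | j. 1 \<le> j \<and> j \<le> length a}"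

fun south :: "nat \<times> nat \<Rightarrow> nat \<times> nat" where
  "south (j, r) = (j, r - 1)"

fun leg :: "nat list \<Rightarrow> nat \<times> nat \<Rightarrow> nat" where
  "leg a (j, r) = col a j - r"

fun Arm :: "nat list \<Rightarrow> nat \<times> nat \<Rightarrow> (nat \<times> nat) set" where
  "Arm a (j, r) =
     {(j', r'). (j', r') \<in> adg a \<and> r' = r - 1 \<and> j' < j \<and> col a j' < col a j}
   \<union> {(j', r'). (j', r') \<in> dg a \<and> r' = r \<and> j' > j \<and> col a j' \<le> col a j}"

definition arm :: "nat list \<Rightarrow> nat \<times> nat \<Rightarrow> nat" where
  "arm a u = card (Arm a u)"

fun attacks :: "nat \<times> nat \<Rightarrow> nat \<times> nat \<Rightarrow> bool" where
  "attacks (j, r) (j', r') \<longleftrightarrow>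
     (r = r' \<and> j \<noteq> j') \<or> (r' = r + 1 \<and> j' > j) \<or> (r = r' + 1 \<and> j > j')"

text \<open>Fillings are total functions, normalised to 0 outside the augmented diagram.\<close>
definition filling :: "nat list \<Rightarrow> nat list \<Rightarrow> (nat \<times> nat \<Rightarrow> nat) \<Rightarrow> bool" where
  "filling a tau T \<longleftrightarrow>
     (\<forall>u \<in> adg a. T u \<in> {1..length a}) \<and> (\<forall>u. u \<notin> adg a \<longrightarrow> T u = 0) \<and>
     (\<forall>j. 1 \<le> j \<and> j \<le> length a \<longrightarrow> T (j, 0) = col tau j)"

definition nonattacking :: "nat list \<Rightarrow> (nat \<times> nat \<Rightarrow> nat) \<Rightarrow> bool" where
  "nonattacking a T \<longleftrightarrow> (\<forall>u \<in> adg a. \<forall>v \<in> adg a. attacks u v \<longrightarrow> T u \<noteq> T v)"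

definition content :: "nat list \<Rightarrow> (nat \<times> nat \<Rightarrow> nat) \<Rightarrow> nat list" where
  "content a T = map (\<lambda>k. card {u \<in> dg a. T u = k}) [1..<length a + 1]"

definition NAF :: "nat list \<Rightarrow> nat list \<Rightarrow> (nat \<times> nat \<Rightarrow> nat) set" where
  "NAF a tau = {T. filling a tau T \<and> nonattacking a T}"

definition NAFc :: "nat list \<Rightarrow> nat list \<Rightarrow> nat list \<Rightarrow> (nat \<times> nat \<Rightarrow> nat) set" where
  "NAFc a tau beta = {T \<in> NAF a tau. content a T = beta}"

definition chi :: "nat \<Rightarrow> nat \<Rightarrow> int" where
  "chi x y = (if x > y then 1 else 0)"

definition chi3 :: "nat \<Rightarrow> nat \<Rightarrow> nat \<Rightarrow> int" where
  "chi3 x y z = chi x y + chi y z - chi x z"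

definition maj :: "nat list \<Rightarrow> (nat \<times> nat \<Rightarrow> nat) \<Rightarrow> nat" where
  "maj a T = (\<Sum>u \<in> {u \<in> dg a. T u > T (south u)}. leg a u + 1)"

definition coinv :: "nat list \<Rightarrow> (nat \<times> nat \<Rightarrow> nat) \<Rightarrow> nat" where
  "coinv a T = card {(u, v, w). u \<in> dg a \<and> w = south u \<and> v \<in> Arm a u \<and>
                      chi3 (T u) (T v) (T w) \<noteq> 1}"

definition wt :: "nat list \<Rightarrow> (nat \<times> nat \<Rightarrow> nat) \<Rightarrow> qt" where
  "wt a T = qv ^ maj a T * tv ^ coinv a T *
     (\<Prod>u \<in> {u \<in> dg a. T u \<noteq> T (south u)}.
        (1 - tv) / (1 - qv ^ (1 + leg a u) * tv ^ (1 + arm a u)))"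

definition swap :: "nat \<Rightarrow> nat \<Rightarrow> (nat \<times> nat \<Rightarrow> nat) \<Rightarrow> (nat \<times> nat \<Rightarrow> nat)" where
  "swap i r T = T((i, r) := T (i + 1, r), (i + 1, r) := T (i, r))"

fun Omega :: "nat \<Rightarrow> nat \<Rightarrow> (nat \<times> nat \<Rightarrow> nat) \<Rightarrow> (nat \<times> nat \<Rightarrow> nat)" where
  "Omega i 0 T = swap i 0 T"
| "Omega i (Suc h) T = swap i (Suc h) (Omega i h T)"

definition rho :: "nat list \<Rightarrow> nat \<Rightarrow> (nat \<times> nat \<Rightarrow> nat) \<Rightarrow> nat \<Rightarrow> qt" where
  "rho al i T r =
    (if r = col al i then 0 else
     let a = T (i, r); b = T (i + 1, r); c = T (i, r + 1); d = T (i + 1, r + 1);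
         A = arm al (i + 1, r + 1); l = leg al (i + 1, r + 1) in
     if card {a, b, c, d} = 4 then
       (if chi3 c d a = chi3 c d b then 0
        else if chi3 c d a = chi3 d c b then 1 else 0)
     else if card {a, b, c, d} = 3 then
       (if b = c then 0
        else if b = d then 1
        else if a = c then
          tv ^ nat (1 - chi3 d a b) * ((1 - qv ^ (l + 1) * tv ^ (A + 1)) / (1 - qv ^ (l + 1) * tv ^ (A + 2)))
        else 0)
     else if a = c \<and> b = d then 1
     else 0)"

definition Pi :: "nat list \<Rightarrow> nat \<Rightarrow> (nat \<times> nat \<Rightarrow> nat) \<Rightarrow> (nat \<times> nat \<Rightarrow> nat) \<Rightarrow> qt" where
  "Pi al i T U =
    (if \<exists>h \<le> col al i. U = Omega i h T then
       (let h = (SOME h. h \<le> col al i \<and> U = Omega i h T) in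
         (\<Prod>r < h. rho al i T r) * (1 - rho al i T h))
     else 0)"

definition prob_bij :: "'t set \<Rightarrow> 'u set \<Rightarrow> ('t \<Rightarrow> 'k::field) \<Rightarrow> ('u \<Rightarrow> 'k)
    \<Rightarrow> ('t \<Rightarrow> 'u \<Rightarrow> 'k) \<Rightarrow> ('u \<Rightarrow> 't \<Rightarrow> 'k) \<Rightarrow> bool" where
  "prob_bij TT UU wT wU PT PU \<longleftrightarrow>
     (\<forall>T \<in> TT. (\<Sum>U \<in> UU. PT T U) = 1) \<and>
     (\<forall>U \<in> UU. (\<Sum>T \<in> TT. PU U T) = 1) \<and>
     (\<forall>T \<in> TT. \<forall>U \<in> UU. wT T * PT T U = wU U * PU U T)"

end

theory Submission
  imports Defs
begin

text \<open>
  The weight is a product of box weights. Because alpha_i = alpha_(i+1), Omega_(0,h)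
  relabels the boxes by an involution of the augmented diagram that exchanges (i,r) and
  (i+1,r) for r <= h and maps the arm of every box outside these two columns into itself;
  so only the boxes of columns i and i+1 change their weights. Grouped by rows, the pair
  in row r depends only on the entries a, b below and c, d in row r and on coinversion
  counts over the common arm of (i+1,r). Detailed balance then holds row by row: rows
  r <= h, where the swap acts on both a, b and c, d, balance with the factor rho_(r-1);
  row h+1, where it acts on a, b only, balances with the factor 1 - rho_h; higher rows
  do not change. Summing over h telescopes to 1 - prod_r rho_r = 1 because
  rho_(alpha_i) = 0, and Omega_(0,h)(T) is non-attacking whenever its probability is
  nonzero, since the swap can only create an attack if rho_r = 0 for some r < h or rho_h = 1.
\<close>

section \<open>Balance of two adjacent boxes in a row\<close>

lemma chi3_0_or_1: "chi3 x y z = 0 \<or> chi3 x y z = 1"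
  unfolding chi3_def chi_def by auto

lemma chi3_same_ends: "x \<noteq> y \<Longrightarrow> chi3 x y x = 1"
  unfolding chi3_def chi_def by auto

lemma chi3_swap: "x \<noteq> y \<Longrightarrow> chi3 y x z = 1 - chi3 x y z"
  unfolding chi3_def chi_def by auto

definition arm_count :: "'b set \<Rightarrow> ('b \<Rightarrow> nat) \<Rightarrow> nat \<Rightarrow> nat \<Rightarrow> nat" where
  "arm_count C f x y = card {v \<in> C. chi3 x (f v) y \<noteq> 1}"

lemma int_arm_count:
  assumes "finite C"
  shows "int (arm_count C f x y) = (\<Sum>v\<in>C. 1 - chi3 x (f v) y)"
proof -
  have "(\<Sum>v\<in>C. 1 - chi3 x (f v) y) = (\<Sum>v\<in>C. of_bool (chi3 x (f v) y \<noteq> 1))"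
    by (rule sum.cong) (use chi3_0_or_1 in auto)
  also have "\<dots> = int (arm_count C f x y)"
    using assms by (simp add: arm_count_def Int_def conj_commute)
  finally show ?thesis ..
qed

lemma arm_count_exchange:
  assumes "finite C"
  shows "int (arm_count C f c b) + int (arm_count C f d a) + int (card C) * (chi c a + chi d b)
       = int (arm_count C f c a) + int (arm_count C f d b) + int (card C) * (chi c b + chi d a)"
proof -
  have "int (arm_count C f c b) + int (arm_count C f d a) + int (card C) * (chi c a + chi d b)
      = (\<Sum>v\<in>C. (1 - chi3 c (f v) b) + (1 - chi3 d (f v) a) + (chi c a + chi d b))"
    unfolding int_arm_count[OF assms] sum.distrib by (simp add: distrib_left)
  also have "\<dots> = (\<Sum>v\<in>C. (1 - chi3 c (f v) a) + (1 - chi3 d (f v) b) + (chi c b + chi d a))"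
    by (rule sum.cong) (simp_all add: chi3_def)
  also have "\<dots> = int (arm_count C f c a) + int (arm_count C f d b) + int (card C) * (chi c b + chi d a)"
    unfolding int_arm_count[OF assms] sum.distrib by (simp add: distrib_left)
  finally show ?thesis .
qed

lemma arm_count_insert:
  assumes "finite C" "x \<notin> C"
  shows "arm_count (insert x C) f c a = arm_count C f c a + of_bool (chi3 c (f x) a \<noteq> 1)"
proof -
  have "{v \<in> insert x C. chi3 c (f v) a \<noteq> 1}
      = (if chi3 c (f x) a \<noteq> 1 then insert x {v \<in> C. chi3 c (f v) a \<noteq> 1} else {v \<in> C. chi3 c (f v) a \<noteq> 1})"
    by auto
  then show ?thesis
    using assms by (simp add: arm_count_def)
qed

definition change_factor :: "'a::field \<Rightarrow> 'a \<Rightarrow> nat \<Rightarrow> nat \<Rightarrow> nat \<Rightarrow> 'a" where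
  "change_factor Q t n x y = (if x \<noteq> y then (1 - t) / (1 - Q * t ^ (n + 1)) else 1)"

text \<open>The weight of the boxes (i,r), (i+1,r) holding c, d above a, b, with Q standing
  for q^(leg+1). The arm of (i,r) is the common arm C of (i+1,r) together with the box
  (i+1,r) itself, which contributes the triple (c, d, a).\<close>
definition pair_wt ::
    "'a::field \<Rightarrow> 'a \<Rightarrow> 'b set \<Rightarrow> ('b \<Rightarrow> nat) \<Rightarrow> nat \<Rightarrow> nat \<Rightarrow> nat \<Rightarrow> nat \<Rightarrow> 'a" where
  "pair_wt Q t C f a b c d = Q ^ (of_bool (a < c) + of_bool (b < d)) *
     t ^ (arm_count C f c a + arm_count C f d b + of_bool (chi3 c d a \<noteq> 1)) *
     change_factor Q t (card C + 1) c a * change_factor Q t (card C) d b"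

definition rho_loc :: "'a::field \<Rightarrow> 'a \<Rightarrow> nat \<Rightarrow> nat \<Rightarrow> nat \<Rightarrow> nat \<Rightarrow> nat \<Rightarrow> 'a" where
  "rho_loc Q t A a b c d =
     (if card {a, b, c, d} = 4 then
       (if chi3 c d a = chi3 c d b then 0
        else if chi3 c d a = chi3 d c b then 1 else 0)
     else if card {a, b, c, d} = 3 then
       (if b = c then 0
        else if b = d then 1
        else if a = c then
          t ^ nat (1 - chi3 d a b) * ((1 - Q * t ^ (A + 1)) / (1 - Q * t ^ (A + 2)))
        else 0)
     else if a = c \<and> b = d then 1
     else 0)"

lemma card_distinct4: "distinct [a, b, c, d] \<Longrightarrow> card {a, b, c, d} = 4"
  using distinct_card[of "[a, b, c, d]"] by simp

lemma card_distinct3: "distinct [a, b, c] \<Longrightarrow> card {a, b, c} = 3"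
  using distinct_card[of "[a, b, c]"] by simp

lemma rho_loc_distinct:
  assumes "distinct [a, b, c, d]"
  shows "rho_loc Q t A a b c d = (if chi3 c d a = chi3 c d b then 0 else 1)"
proof -
  have "chi3 c d a \<noteq> chi3 c d b \<Longrightarrow> chi3 c d a = chi3 d c b"
    using chi3_swap[of c d b] chi3_0_or_1[of c d a] chi3_0_or_1[of c d b] assms by auto
  then show ?thesis
    unfolding rho_loc_def using card_distinct4[OF assms] by auto
qed

lemma rho_loc_left_repeat:
  assumes "distinct [a, b, d]"
  shows "rho_loc Q t A a b a d = t ^ nat (1 - chi3 d a b) * ((1 - Q * t ^ (A + 1)) / (1 - Q * t ^ (A + 2)))"
  using assms card_distinct3[OF assms] by (simp add: rho_loc_def insert_commute)

lemma rho_loc_cross_repeat: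
  "distinct [a, b, d] \<Longrightarrow> rho_loc Q t A a b b d = 0"
  using card_distinct3[of a b d] by (simp add: rho_loc_def insert_commute)

lemma rho_loc_right_repeat:
  "a \<noteq> b \<Longrightarrow> c \<noteq> b \<Longrightarrow> rho_loc Q t A a b c b = 1"
  using card_distinct3[of a b c] by (cases "a = c") (simp_all add: rho_loc_def insert_commute)

lemma pair_wt_rho_loc_balance_left_repeat:
  fixes Q t :: "'a::field"
  assumes "distinct [a, b, d]" and D1: "1 - Q * t ^ (card C + 1) \<noteq> 0"
  shows "pair_wt Q t C f a b a d * rho_loc Q t (card C) a b a d
       = pair_wt Q t C f b a d a * rho_loc Q t (card C) b a d a"
proof -
  define X where "X = Q ^ of_bool (b < d) * t ^ (arm_count C f a a + arm_count C f d b)"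
  define e where "e = nat (1 - chi3 d a b)"
  have e: "e = of_bool (chi3 d a b \<noteq> 1)"
    unfolding e_def using chi3_0_or_1[of d a b] by auto
  have "pair_wt Q t C f a b a d * rho_loc Q t (card C) a b a d
      = X * t ^ e * ((1 - t) / (1 - Q * t ^ (card C + 1))
          * ((1 - Q * t ^ (card C + 1)) / (1 - Q * t ^ (card C + 2))))"
    using assms chi3_same_ends[of a d]
    by (simp add: rho_loc_left_repeat pair_wt_def change_factor_def X_def e_def[symmetric])
  also have "\<dots> = X * t ^ e * ((1 - t) / (1 - Q * t ^ (card C + 2)))"
    using D1 by simp
  also have "\<dots> = pair_wt Q t C f b a d a * rho_loc Q t (card C) b a d a"
    using assms
    by (simp add: rho_loc_right_repeat pair_wt_def change_factor_def X_def e power_add ac_simps)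
  finally show ?thesis .
qed

lemma pair_wt_rho_loc_balance:
  fixes Q t :: "'a::field"
  assumes "a \<noteq> b" "c \<noteq> d" "a \<noteq> d" "b \<noteq> c" and D1: "1 - Q * t ^ (card C + 1) \<noteq> 0"
  shows "pair_wt Q t C f a b c d * rho_loc Q t (card C) a b c d
       = pair_wt Q t C f b a d c * rho_loc Q t (card C) b a d c"
proof -
  consider (left) "a = c" "b \<noteq> d" | (right) "a \<noteq> c" "b = d" | (both) "a = c" "b = d"
    | (distinct) "distinct [a, b, c, d]"
    using assms by auto
  then show ?thesis
  proof cases
    case left
    then show ?thesis using pair_wt_rho_loc_balance_left_repeat[of a b d Q t C f] assms by simp
  next
    case right
    then show ?thesis using pair_wt_rho_loc_balance_left_repeat[of b a c Q t C f] assms by simp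
  next
    case both
    then show ?thesis
      using assms chi3_same_ends[of a b] chi3_same_ends[of b a]
      by (simp add: rho_loc_right_repeat pair_wt_def change_factor_def ac_simps)
  next
    case distinct
    then have "distinct [b, a, d, c]" by auto
    have swap: "chi3 d c x = 1 - chi3 c d x" for x using \<open>c \<noteq> d\<close> by (rule chi3_swap)
    show ?thesis
    proof (cases "chi3 c d a = chi3 c d b")
      case True
      then have "rho_loc Q t (card C) a b c d = 0" "rho_loc Q t (card C) b a d c = 0"
        using distinct \<open>distinct [b, a, d, c]\<close> by (simp_all add: rho_loc_distinct swap)
      then show ?thesis by simp
    next
      case False
      then have "chi3 c d a = chi3 d c b" "chi3 d c a \<noteq> chi3 d c b"
        using swap chi3_0_or_1[of c d a] chi3_0_or_1[of c d b] by auto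
      then have "rho_loc Q t (card C) a b c d = 1" "rho_loc Q t (card C) b a d c = 1"
        using distinct \<open>distinct [b, a, d, c]\<close> False by (simp_all add: rho_loc_distinct)
      with distinct \<open>chi3 c d a = chi3 d c b\<close> show ?thesis
        by (simp add: pair_wt_def change_factor_def ac_simps)
    qed
  qed
qed

lemma one_minus_rho_loc_left_repeat:
  fixes Q t :: "'a::field"
  assumes "e \<le> 1" and "1 - Q * t ^ (A + 2) \<noteq> 0"
  shows "1 - t ^ (1 - e) * ((1 - Q * t ^ (A + 1)) / (1 - Q * t ^ (A + 2)))
       = (Q * t ^ (A + 1)) ^ e * ((1 - t) / (1 - Q * t ^ (A + 2)))"
  using assms by (cases e) (auto simp: field_simps)

lemma pair_wt_one_minus_rho_loc_balance_left_repeat: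
  fixes Q t :: "'a::field"
  assumes "distinct [a, b, d]" and "finite C" and D2: "1 - Q * t ^ (card C + 2) \<noteq> 0"
  shows "pair_wt Q t C f a b a d * (1 - rho_loc Q t (card C) a b a d)
       = pair_wt Q t C f b a a d * (1 - rho_loc Q t (card C) b a a d)"
proof -
  define e where "e = nat (chi3 d a b)"
  define K where "K = arm_count C f a a + arm_count C f d b"
  have e: "e \<le> 1" "chi3 d a b = int e" "nat (1 - chi3 d a b) = 1 - e"
    using chi3_0_or_1[of d a b] unfolding e_def by auto
  have chi_rel: "chi a b + chi d a = chi d b + int e"
    using e(2) unfolding chi3_def by simp
  then have Q_exp: "of_bool (b < a) + of_bool (a < d) = of_bool (b < d) + e"
    unfolding chi_def of_bool_def by (auto split: if_splits)
  have chi3_adb: "of_bool (chi3 a d b \<noteq> 1) = e"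
    using e chi3_swap[of d a b] assms(1) by auto
  have "int (arm_count C f a b) + int (arm_count C f d a) = int K + int (card C) * int e"
    using arm_count_exchange[OF \<open>finite C\<close>, of f a b d a, unfolded chi_rel]
    by (simp add: K_def chi_def algebra_simps)
  then have t_exp: "arm_count C f a b + arm_count C f d a + of_bool (chi3 a d b \<noteq> 1) = K + (card C + 1) * e"
    unfolding chi3_adb by (simp add: algebra_simps flip: of_nat_mult of_nat_add)
  have "1 - rho_loc Q t (card C) a b a d = (Q * t ^ (card C + 1)) ^ e * ((1 - t) / (1 - Q * t ^ (card C + 2)))"
    unfolding rho_loc_left_repeat[OF assms(1)] e(3) by (rule one_minus_rho_loc_left_repeat[OF e(1) D2])
  then have "pair_wt Q t C f a b a d * (1 - rho_loc Q t (card C) a b a d)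
      = Q ^ of_bool (b < d) * t ^ K * ((1 - t) / (1 - Q * t ^ (card C + 1)))
        * ((Q * t ^ (card C + 1)) ^ e * ((1 - t) / (1 - Q * t ^ (card C + 2))))"
    using assms chi3_same_ends[of a d] by (simp add: pair_wt_def change_factor_def K_def)
  also have "\<dots> = Q ^ (of_bool (b < a) + of_bool (a < d))
        * t ^ (arm_count C f a b + arm_count C f d a + of_bool (chi3 a d b \<noteq> 1))
        * ((1 - t) / (1 - Q * t ^ (card C + 2))) * ((1 - t) / (1 - Q * t ^ (card C + 1)))"
    unfolding Q_exp t_exp by (simp add: power_add power_mult_distrib ac_simps flip: power_mult)
  also have "\<dots> = pair_wt Q t C f b a a d * (1 - rho_loc Q t (card C) b a a d)"
    using assms by (simp add: pair_wt_def change_factor_def rho_loc_cross_repeat)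
  finally show ?thesis .
qed

lemma pair_wt_one_minus_rho_loc_balance:
  fixes Q t :: "'a::field"
  assumes "a \<noteq> b" "c \<noteq> d" "a \<noteq> d" "b \<noteq> d" and "finite C" and D2: "1 - Q * t ^ (card C + 2) \<noteq> 0"
  shows "pair_wt Q t C f a b c d * (1 - rho_loc Q t (card C) a b c d)
       = pair_wt Q t C f b a c d * (1 - rho_loc Q t (card C) b a c d)"
proof -
  consider (left) "c = a" | (right) "c = b" | (distinct) "distinct [a, b, c, d]"
    using assms by auto
  then show ?thesis
  proof cases
    case left
    then show ?thesis using pair_wt_one_minus_rho_loc_balance_left_repeat[of a b d C Q t f] assms by simp
  next
    case right
    then show ?thesis using pair_wt_one_minus_rho_loc_balance_left_repeat[of b a d C Q t f] assms by simp
  next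
    case distinct
    then have "distinct [b, a, c, d]" by auto
    show ?thesis
    proof (cases "chi3 c d a = chi3 c d b")
      case True
      then have chi_eq: "chi c b + chi d a = chi c a + chi d b"
        unfolding chi3_def by simp
      then have "of_bool (a < c) + of_bool (b < d) = of_bool (b < c) + (of_bool (a < d) :: nat)"
        unfolding chi_def of_bool_def by (auto split: if_splits)
      moreover have "arm_count C f c a + arm_count C f d b = arm_count C f c b + arm_count C f d a"
        using arm_count_exchange[OF \<open>finite C\<close>, of f c b d a] chi_eq by simp
      moreover have "rho_loc Q t (card C) a b c d = 0" "rho_loc Q t (card C) b a c d = 0"
        using distinct \<open>distinct [b, a, c, d]\<close> True by (simp_all add: rho_loc_distinct)
      ultimately show ?thesis
        using distinct True by (simp add: pair_wt_def change_factor_def ac_simps)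
    next
      case False
      then have "rho_loc Q t (card C) a b c d = 1" "rho_loc Q t (card C) b a c d = 1"
        using distinct \<open>distinct [b, a, c, d]\<close> by (simp_all add: rho_loc_distinct)
      then show ?thesis by simp
    qed
  qed
qed

section \<open>Weights of fillings\<close>

lemma adg_iff: "(j, r) \<in> adg a \<longleftrightarrow> 1 \<le> j \<and> j \<le> length a \<and> r \<le> col a j"
  unfolding adg_def dg_def by auto

lemma dg_iff: "(j, r) \<in> dg a \<longleftrightarrow> 1 \<le> j \<and> j \<le> length a \<and> 1 \<le> r \<and> r \<le> col a j"
  unfolding dg_def by auto

lemma finite_adg: "finite (adg a)"
proof (rule finite_subset)
  show "adg a \<subseteq> Sigma {1..length a} (\<lambda>j. {0..col a j})"
    by (auto simp: adg_def dg_def)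
qed simp

lemma finite_dg: "finite (dg a)"
  using finite_adg by (rule finite_subset[rotated]) (auto simp: adg_def)

lemma finite_Arm: "finite (Arm a u)"
  by (rule finite_subset[OF _ finite_adg]) (cases u, auto simp: adg_def)

definition box_wt :: "nat list \<Rightarrow> (nat \<times> nat \<Rightarrow> nat) \<Rightarrow> nat \<times> nat \<Rightarrow> qt" where
  "box_wt a T u = qv ^ (if T (south u) < T u then leg a u + 1 else 0) *
     tv ^ arm_count (Arm a u) T (T u) (T (south u)) *
     (if T u \<noteq> T (south u) then (1 - tv) / (1 - qv ^ (1 + leg a u) * tv ^ (1 + arm a u)) else 1)"

lemma coinv_eq_sum: "coinv a T = (\<Sum>u\<in>dg a. arm_count (Arm a u) T (T u) (T (south u)))"
proof -
  have "{(u, v, w). u \<in> dg a \<and> w = south u \<and> v \<in> Arm a u \<and> chi3 (T u) (T v) (T w) \<noteq> 1}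
      = (\<Union>u\<in>dg a. (\<lambda>v. (u, v, south u)) ` {v \<in> Arm a u. chi3 (T u) (T v) (T (south u)) \<noteq> 1})"
    by auto
  then have "coinv a T
      = (\<Sum>u\<in>dg a. card ((\<lambda>v. (u, v, south u)) ` {v \<in> Arm a u. chi3 (T u) (T v) (T (south u)) \<noteq> 1}))"
    unfolding coinv_def by (simp only:) (rule card_UN_disjoint, auto simp: finite_dg finite_Arm)
  also have "\<dots> = (\<Sum>u\<in>dg a. arm_count (Arm a u) T (T u) (T (south u)))"
    by (rule sum.cong) (auto simp: arm_count_def card_image inj_on_def)
  finally show ?thesis .
qed

lemma wt_eq_prod_box_wt: "wt a T = (\<Prod>u\<in>dg a. box_wt a T u)"
proof -
  have maj: "maj a T = (\<Sum>u\<in>dg a. if T (south u) < T u then leg a u + 1 else 0)"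
    unfolding maj_def by (rule sum.inter_filter[OF finite_dg])
  have factors: "(\<Prod>u \<in> {u \<in> dg a. T u \<noteq> T (south u)}.
        (1 - tv) / (1 - qv ^ (1 + leg a u) * tv ^ (1 + arm a u))) =
      (\<Prod>u\<in>dg a. if T u \<noteq> T (south u) then (1 - tv) / (1 - qv ^ (1 + leg a u) * tv ^ (1 + arm a u)) else 1)"
    by (rule prod.inter_filter[OF finite_dg])
  show ?thesis
    unfolding wt_def maj factors coinv_eq_sum power_sum box_wt_def prod.distrib ..
qed

lemma Fract_power: "Fract (a::'a::idom) 1 ^ n = Fract (a ^ n) 1"
  by (induction n) (simp_all add: One_fract_def)

lemma one_minus_qv_tv_neq_0:
  assumes "k \<ge> 1"
  shows "1 - qv ^ k * tv ^ j \<noteq> 0"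
proof
  let ?P = "1 - [:[:0, 1:]:] ^ k * [:0, 1:] ^ j :: rat poly poly"
  assume "1 - qv ^ k * tv ^ j = 0"
  then have "Fract ?P 1 = Fract 0 1"
    unfolding qv_def tv_def Fract_power mult_fract One_fract_def by (simp add: Zero_fract_def)
  then have "?P = 0" by (simp add: eq_fract)
  moreover have "poly (poly ?P 0) 0 = 1"
    using assms by (simp add: poly_power zero_power)
  ultimately show False by simp
qed

lemma finite_NAFc: "finite (NAFc al tau beta)"
proof -
  have "NAF al tau \<subseteq> {f. \<forall>x. (x \<in> adg al \<longrightarrow> f x \<in> {1..length al}) \<and> (x \<notin> adg al \<longrightarrow> f x = 0)}"
    unfolding NAF_def filling_def by auto
  then have "finite (NAF al tau)"
    by (rule finite_subset) (intro finite_set_of_finite_funs finite_adg finite_atLeastAtMost)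
  then show ?thesis
    unfolding NAFc_def by simp
qed

section \<open>Exchanging two columns of equal height\<close>

definition swap_boxes :: "nat \<Rightarrow> nat \<Rightarrow> nat \<times> nat \<Rightarrow> nat \<times> nat" where
  "swap_boxes i h u = (if snd u \<le> h \<and> fst u = i then (Suc i, snd u)
                       else if snd u \<le> h \<and> fst u = Suc i then (i, snd u) else u)"

lemma swap_boxes_simps:
  "swap_boxes i h (i, r) = (if r \<le> h then (Suc i, r) else (i, r))"
  "swap_boxes i h (Suc i, r) = (if r \<le> h then (i, r) else (Suc i, r))"
  "j \<noteq> i \<Longrightarrow> j \<noteq> Suc i \<Longrightarrow> swap_boxes i h (j, r) = (j, r)"
  by (auto simp: swap_boxes_def)

lemma swap_boxes_swap_boxes [simp]: "swap_boxes i h (swap_boxes i h u) = u"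
  by (cases u) (auto simp: swap_boxes_def)

lemma inj_swap_boxes: "inj (swap_boxes i h)"
  by (metis injI swap_boxes_swap_boxes)

lemma Omega_eq_comp_swap_boxes: "Omega i h T = T \<circ> swap_boxes i h"
  by (induction h) (auto simp: swap_def swap_boxes_def fun_eq_iff)

lemma Omega_Omega: "Omega i h (Omega i h T) = T"
  by (simp add: Omega_eq_comp_swap_boxes fun_eq_iff)

lemma sum_prod_telescope:
  fixes f :: "nat \<Rightarrow> 'a::comm_ring_1"
  shows "(\<Sum>h\<le>m. (\<Prod>r<h. f r) * (1 - f h)) = 1 - (\<Prod>r\<le>m. f r)"
proof -
  have "(\<Sum>h\<le>m. (\<Prod>r<h. f r) * (1 - f h)) = (\<Sum>h<Suc m. (\<Prod>r<h. f r) - (\<Prod>r<Suc h. f r))"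
    by (rule sum.cong[OF lessThan_Suc_atMost[symmetric]]) (simp only: prod.lessThan_Suc, simp add: algebra_simps)
  also have "\<dots> = 1 - (\<Prod>r\<le>m. f r)"
    by (subst sum_lessThan_telescope') (simp add: lessThan_Suc_atMost)
  finally show ?thesis .
qed

definition path_prob :: "nat list \<Rightarrow> nat \<Rightarrow> (nat \<times> nat \<Rightarrow> nat) \<Rightarrow> nat \<Rightarrow> qt" where
  "path_prob al i T h = (\<Prod>r<h. rho al i T r) * (1 - rho al i T h)"

lemma rho_top: "rho al i T (col al i) = 0"
  unfolding rho_def by simp

lemma sum_path_prob: "(\<Sum>h\<le>col al i. path_prob al i T h) = 1"
  unfolding path_prob_def sum_prod_telescope using rho_top[of al i T] by (auto intro: prod_zero)

lemma perm_si_perm_si: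
  "1 \<le> i \<Longrightarrow> i < length tau \<Longrightarrow> perm_si (perm_si tau i) i = tau"
  unfolding perm_si_def by (auto intro!: nth_equalityI simp: nth_list_update)

locale equal_columns =
  fixes al :: "nat list" and i :: nat
  assumes i_ge_1: "1 \<le> i" and i_less: "i < length al" and col_eq: "col al (Suc i) = col al i"
begin

lemma adg_swap_boxes_iff [simp]: "swap_boxes i h u \<in> adg al \<longleftrightarrow> u \<in> adg al"
  using i_ge_1 i_less col_eq by (cases u) (auto simp: swap_boxes_def adg_iff)

lemma dg_swap_boxes_iff [simp]: "swap_boxes i h u \<in> dg al \<longleftrightarrow> u \<in> dg al"
  using i_ge_1 i_less col_eq by (cases u) (auto simp: swap_boxes_def dg_iff)

lemma swap_boxes_mem_Arm:
  assumes "fst u \<noteq> i" "fst u \<noteq> Suc i" "v \<in> Arm al u"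
  shows "swap_boxes i h v \<in> Arm al u"
  using assms i_ge_1 i_less col_eq
  by (cases u, cases v) (auto simp: swap_boxes_def adg_iff dg_iff)

lemma Arm_left_column:
  assumes "s < col al i"
  shows "Arm al (i, Suc s) = insert (Suc i, Suc s) (Arm al (Suc i, Suc s))"
    and "(Suc i, Suc s) \<notin> Arm al (Suc i, Suc s)"
    and "v \<in> Arm al (Suc i, Suc s) \<Longrightarrow> fst v \<noteq> i \<and> fst v \<noteq> Suc i"
  using assms i_ge_1 i_less col_eq by (auto simp: adg_iff dg_iff less_Suc_eq)

lemma prod_dg_split:
  fixes g :: "nat \<times> nat \<Rightarrow> 'b::comm_monoid_mult"
  shows "(\<Prod>u\<in>dg al. g u) = (\<Prod>u\<in>{u \<in> dg al. fst u \<noteq> i \<and> fst u \<noteq> Suc i}. g u) *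
          (\<Prod>r\<in>{1..col al i}. g (i, r) * g (Suc i, r))"
proof -
  let ?L = "(\<lambda>r. (i, r)) ` {1..col al i}" and ?R = "(\<lambda>r. (Suc i, r)) ` {1..col al i}"
  have "?L \<union> ?R \<subseteq> dg al" and "dg al - (?L \<union> ?R) = {u \<in> dg al. fst u \<noteq> i \<and> fst u \<noteq> Suc i}"
    using i_ge_1 i_less col_eq by (auto simp: dg_iff)
  then have "(\<Prod>u\<in>dg al. g u) = (\<Prod>u\<in>{u \<in> dg al. fst u \<noteq> i \<and> fst u \<noteq> Suc i}. g u) * (\<Prod>u\<in>?L \<union> ?R. g u)"
    using prod.subset_diff[OF _ finite_dg] by metis
  also have "(\<Prod>u\<in>?L \<union> ?R. g u) = (\<Prod>r\<in>{1..col al i}. g (i, r)) * (\<Prod>r\<in>{1..col al i}. g (Suc i, r))"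
    by (subst prod.union_disjoint) (auto simp: prod.reindex inj_on_def)
  finally show ?thesis
    by (simp add: prod.distrib)
qed

lemma box_wt_swap_boxes_outside:
  assumes "fst u \<noteq> i" "fst u \<noteq> Suc i"
  shows "box_wt al (T \<circ> swap_boxes i h) u = box_wt al T u"
proof -
  have fix_u: "swap_boxes i h u = u" "swap_boxes i h (south u) = south u"
    using assms by (cases u, simp add: swap_boxes_simps)+
  have "{v \<in> Arm al u. chi3 x (T (swap_boxes i h v)) y \<noteq> 1}
      = swap_boxes i h ` {v \<in> Arm al u. chi3 x (T v) y \<noteq> 1}" for x y
    using swap_boxes_mem_Arm[OF assms]
    by (auto intro!: image_eqI[where x = "swap_boxes i h _"])
  then have "arm_count (Arm al u) (T \<circ> swap_boxes i h) x y = arm_count (Arm al u) T x y" for x y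
    unfolding arm_count_def using card_image[OF inj_on_subset[OF inj_swap_boxes subset_UNIV]] by simp
  then show ?thesis
    unfolding box_wt_def using fix_u by simp
qed

lemma arm_count_swap_boxes:
  assumes "s < col al i"
  shows "arm_count (Arm al (Suc i, Suc s)) (T \<circ> swap_boxes i h) = arm_count (Arm al (Suc i, Suc s)) T"
proof -
  have "swap_boxes i h v = v" if "v \<in> Arm al (Suc i, Suc s)" for v
    using Arm_left_column(3)[OF assms that] by (cases v) (simp add: swap_boxes_simps)
  then show ?thesis
    unfolding arm_count_def by (auto intro!: ext arg_cong[where f = card])
qed

lemma box_wt_row:
  assumes s: "s < col al i"
  shows "box_wt al X (i, Suc s) * box_wt al X (Suc i, Suc s) =
    pair_wt (qv ^ (col al i - s)) tv (Arm al (Suc i, Suc s)) X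
      (X (i, s)) (X (Suc i, s)) (X (i, Suc s)) (X (Suc i, Suc s))"
proof -
  note A = Arm_left_column[OF s]
  define Q where "Q = qv ^ (col al i - s)"
  have "col al i - s = col al i - Suc s + 1"
    using s by simp
  then have pow: "qv ^ (if P then col al i - Suc s + 1 else 0) = Q ^ of_bool P" for P
    unfolding Q_def by simp
  have arm_i: "arm al (i, Suc s) = card (Arm al (Suc i, Suc s)) + 1"
    unfolding arm_def A(1) card.insert[OF finite_Arm A(2)] by simp
  have count_i: "arm_count (Arm al (i, Suc s)) X (X (i, Suc s)) (X (i, s)) =
     arm_count (Arm al (Suc i, Suc s)) X (X (i, Suc s)) (X (i, s))
       + of_bool (chi3 (X (i, Suc s)) (X (Suc i, Suc s)) (X (i, s)) \<noteq> 1)"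
    unfolding A(1) by (rule arm_count_insert[OF finite_Arm A(2)])
  have "box_wt al X (i, Suc s) = Q ^ of_bool (X (i, s) < X (i, Suc s))
      * tv ^ arm_count (Arm al (i, Suc s)) X (X (i, Suc s)) (X (i, s))
      * change_factor Q tv (card (Arm al (Suc i, Suc s)) + 1) (X (i, Suc s)) (X (i, s))"
    unfolding box_wt_def change_factor_def arm_i south.simps leg.simps pow[symmetric]
    using s by (simp add: Q_def add_ac Suc_diff_Suc del: Arm.simps)
  moreover have "box_wt al X (Suc i, Suc s) = Q ^ of_bool (X (Suc i, s) < X (Suc i, Suc s))
      * tv ^ arm_count (Arm al (Suc i, Suc s)) X (X (Suc i, Suc s)) (X (Suc i, s))
      * change_factor Q tv (card (Arm al (Suc i, Suc s))) (X (Suc i, Suc s)) (X (Suc i, s))"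
    unfolding box_wt_def change_factor_def arm_def south.simps leg.simps col_eq pow[symmetric]
    using s by (simp add: Q_def add_ac Suc_diff_Suc del: Arm.simps)
  ultimately show ?thesis
    unfolding pair_wt_def count_i Q_def[symmetric] by (simp add: power_add mult_ac del: Arm.simps)
qed

lemma rho_eq_rho_loc:
  assumes "s < col al i"
  shows "rho al i X s = rho_loc (qv ^ (col al i - s)) tv (card (Arm al (Suc i, Suc s)))
           (X (i, s)) (X (Suc i, s)) (X (i, Suc s)) (X (Suc i, Suc s))"
proof -
  have "rho al i X s = rho_loc (qv ^ (leg al (i + 1, s + 1) + 1)) tv (arm al (i + 1, s + 1))
           (X (i, s)) (X (i + 1, s)) (X (i, s + 1)) (X (i + 1, s + 1))"
    using assms unfolding rho_def rho_loc_def Let_def by simp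
  moreover have "leg al (i + 1, s + 1) + 1 = col al i - s"
    using assms col_eq by simp
  ultimately show ?thesis
    by (simp only: arm_def Suc_eq_plus1)
qed

lemma nonattacking_row:
  assumes "nonattacking al X" "r \<le> col al i"
  shows "X (i, r) \<noteq> X (Suc i, r)"
proof -
  have "(i, r) \<in> adg al" "(Suc i, r) \<in> adg al"
    using assms(2) i_ge_1 i_less col_eq by (auto simp: adg_iff)
  moreover have "attacks (i, r) (Suc i, r)"
    by simp
  ultimately show ?thesis
    using assms(1) unfolding nonattacking_def by blast
qed

lemma nonattacking_diag:
  assumes "nonattacking al X" "r < col al i"
  shows "X (i, r) \<noteq> X (Suc i, Suc r)"
proof -
  have "(i, r) \<in> adg al" "(Suc i, Suc r) \<in> adg al"
    using assms(2) i_ge_1 i_less col_eq by (auto simp: adg_iff)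
  moreover have "attacks (i, r) (Suc i, Suc r)"
    by simp
  ultimately show ?thesis
    using assms(1) unfolding nonattacking_def by blast
qed

definition outer_wt :: "(nat \<times> nat \<Rightarrow> nat) \<Rightarrow> qt" where
  "outer_wt X = (\<Prod>u\<in>{u \<in> dg al. fst u \<noteq> i \<and> fst u \<noteq> Suc i}. box_wt al X u)"

definition row_wt :: "(nat \<times> nat \<Rightarrow> nat) \<Rightarrow> nat \<Rightarrow> qt" where
  "row_wt X r = box_wt al X (i, r) * box_wt al X (Suc i, r)"

text \<open>The share of row r in the probability of Omega_(0,h): rho_(r-1) while rows r-1 and r
  are both swapped, and 1 - rho_h for the first row left in place.\<close>
definition row_prob :: "nat \<Rightarrow> (nat \<times> nat \<Rightarrow> nat) \<Rightarrow> nat \<Rightarrow> qt" where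
  "row_prob h X r = (if r \<le> h then rho al i X (r - 1) else 1) * (if r = Suc h then 1 - rho al i X h else 1)"

lemma prod_row_prob:
  assumes "h \<le> col al i"
  shows "(\<Prod>r\<in>{1..col al i}. row_prob h X r) = path_prob al i X h"
proof -
  have "r \<in> Suc ` {..<h}" if "1 \<le> r" "r \<le> h" for r
    using that by (intro image_eqI[of _ _ "r - 1"]) auto
  then have "{r \<in> {1..col al i}. r \<le> h} = Suc ` {..<h}"
    using assms by auto
  then have "(\<Prod>r\<in>{1..col al i}. if r \<le> h then rho al i X (r - 1) else 1) = (\<Prod>r\<in>Suc ` {..<h}. rho al i X (r - 1))"
    by (simp add: prod.inter_filter[symmetric])
  also have "\<dots> = (\<Prod>r<h. rho al i X r)"
    by (simp add: prod.reindex)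
  finally show ?thesis
    using assms rho_top[of al i X]
    by (cases "h = col al i") (auto simp: row_prob_def path_prob_def prod.distrib prod.delta)
qed

lemma wt_mult_path_prob:
  assumes "h \<le> col al i"
  shows "wt al X * path_prob al i X h = outer_wt X * (\<Prod>r\<in>{1..col al i}. row_wt X r * row_prob h X r)"
  unfolding wt_eq_prod_box_wt prod_dg_split prod_row_prob[OF assms, symmetric] outer_wt_def row_wt_def
  by (simp add: prod.distrib mult_ac)

lemma outer_wt_swap_boxes: "outer_wt (T \<circ> swap_boxes i h) = outer_wt T"
  unfolding outer_wt_def by (rule prod.cong) (auto intro: box_wt_swap_boxes_outside)

lemma row_balance:
  assumes naT: "nonattacking al T" and naU: "nonattacking al (T \<circ> swap_boxes i h)"
    and s: "s < col al i"
  shows "row_wt T (Suc s) * row_prob h T (Suc s)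
       = row_wt (T \<circ> swap_boxes i h) (Suc s) * row_prob h (T \<circ> swap_boxes i h) (Suc s)"
proof -
  define U where "U = T \<circ> swap_boxes i h"
  let ?Q = "qv ^ (col al i - s)" and ?C = "Arm al (Suc i, Suc s)"
  have U: "U (i, r) = (if r \<le> h then T (Suc i, r) else T (i, r))"
          "U (Suc i, r) = (if r \<le> h then T (i, r) else T (Suc i, r))" for r
    unfolding U_def by (simp_all add: swap_boxes_simps)
  have row_wt: "row_wt X (Suc s)
      = pair_wt ?Q tv ?C T (X (i, s)) (X (Suc i, s)) (X (i, Suc s)) (X (Suc i, Suc s))"
    if "X = T \<or> X = U" for X
    using that box_wt_row[OF s, of X] arm_count_swap_boxes[OF s, of T h]
    unfolding row_wt_def U_def pair_wt_def by auto
  have den: "1 - ?Q * tv ^ k \<noteq> 0" for k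
    by (rule one_minus_qv_tv_neq_0) (use s in simp)
  have ab: "T (i, s) \<noteq> T (Suc i, s)" and cd: "T (i, Suc s) \<noteq> T (Suc i, Suc s)"
    and ad: "T (i, s) \<noteq> T (Suc i, Suc s)"
    using nonattacking_row[OF naT] nonattacking_diag[OF naT] s by simp_all
  have diag_U: "U (i, s) \<noteq> U (Suc i, Suc s)"
    using nonattacking_diag[OF naU[folded U_def] s] .
  consider (swapped) "Suc s \<le> h" | (boundary) "h = s" | (above) "h < s" by linarith
  then have "row_wt T (Suc s) * row_prob h T (Suc s) = row_wt U (Suc s) * row_prob h U (Suc s)"
  proof cases
    case swapped
    then have "T (Suc i, s) \<noteq> T (i, Suc s)"
      using diag_U by (simp add: U)
    then show ?thesis
      using swapped pair_wt_rho_loc_balance[OF ab cd ad _ den, where C = ?C and f = T]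
      by (simp add: row_wt row_prob_def rho_eq_rho_loc[OF s] U del: Arm.simps)
  next
    case boundary
    then have "T (Suc i, s) \<noteq> T (Suc i, Suc s)"
      using diag_U by (simp add: U)
    then show ?thesis
      using boundary
        pair_wt_one_minus_rho_loc_balance[OF ab cd ad _ finite_Arm[of al "(Suc i, Suc s)"] den, where f = T]
      by (simp add: row_wt row_prob_def rho_eq_rho_loc[OF s] U del: Arm.simps)
  next
    case above
    then show ?thesis
      by (simp add: row_wt row_prob_def U del: Arm.simps)
  qed
  then show ?thesis
    unfolding U_def .
qed

lemma wt_path_prob_balance:
  assumes "nonattacking al T" "nonattacking al (T \<circ> swap_boxes i h)" "h \<le> col al i"
  shows "wt al T * path_prob al i T h = wt al (T \<circ> swap_boxes i h) * path_prob al i (T \<circ> swap_boxes i h) h"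
proof -
  have "row_wt T r * row_prob h T r = row_wt (T \<circ> swap_boxes i h) r * row_prob h (T \<circ> swap_boxes i h) r"
    if "r \<in> {1..col al i}" for r
    using that row_balance[OF assms(1,2), of "r - 1"] by (cases r) auto
  then show ?thesis
    unfolding wt_mult_path_prob[OF assms(3)] outer_wt_swap_boxes by (rule arg_cong[OF prod.cong, OF refl])
qed

lemma Omega_eq_Omega_imp_eq:
  assumes "nonattacking al T" "h \<le> col al i" "h' \<le> col al i" "Omega i h T = Omega i h' T"
  shows "h = h'"
proof (rule ccontr)
  assume "h \<noteq> h'"
  then obtain k k' where "k < k'" "k' \<le> col al i" "Omega i k T = Omega i k' T"
    using assms by (metis linorder_neqE_nat)
  then have "T (swap_boxes i k (i, k')) = T (swap_boxes i k' (i, k'))"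
    unfolding Omega_eq_comp_swap_boxes by (metis comp_apply)
  then have "T (i, k') = T (Suc i, k')"
    using \<open>k < k'\<close> by (simp add: swap_boxes_simps)
  then show False
    using nonattacking_row[OF assms(1) \<open>k' \<le> col al i\<close>] by simp
qed

lemma Pi_Omega:
  assumes "nonattacking al T" "h \<le> col al i"
  shows "Pi al i T (Omega i h T) = path_prob al i T h"
proof -
  have "(SOME h'. h' \<le> col al i \<and> Omega i h T = Omega i h' T) = h"
    using assms Omega_eq_Omega_imp_eq by (intro some_equality) auto
  then show ?thesis
    unfolding Pi_def path_prob_def using assms(2) by auto
qed

lemma Pi_not_Omega: "\<not> (\<exists>h \<le> col al i. U = Omega i h T) \<Longrightarrow> Pi al i T U = 0"
  unfolding Pi_def by (rule if_not_P)

lemma attacks_swap_boxes_cases: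
  assumes "attacks u v" "\<not> attacks (swap_boxes i h u) (swap_boxes i h v)"
  shows "(\<exists>r < h. {swap_boxes i h u, swap_boxes i h v} = {(Suc i, r), (i, Suc r)})
         \<or> {swap_boxes i h u, swap_boxes i h v} = {(Suc i, h), (Suc i, Suc h)}"
  using assms by (cases u, cases v) (auto simp: swap_boxes_def doubleton_eq_iff split: if_splits)

lemma nonattacking_Omega:
  assumes na: "nonattacking al T" and h: "h \<le> col al i"
    and diag: "\<forall>r<h. T (Suc i, r) \<noteq> T (i, Suc r)"
    and vert: "h < col al i \<longrightarrow> T (Suc i, h) \<noteq> T (Suc i, Suc h)"
  shows "nonattacking al (Omega i h T)"
  unfolding nonattacking_def Omega_eq_comp_swap_boxes
proof (intro ballI impI)
  fix u v assume uv: "u \<in> adg al" "v \<in> adg al" "attacks u v"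
  show "(T \<circ> swap_boxes i h) u \<noteq> (T \<circ> swap_boxes i h) v"
  proof (cases "attacks (swap_boxes i h u) (swap_boxes i h v)")
    case True
    then show ?thesis
      using na uv unfolding nonattacking_def by auto
  next
    case False
    define u' v' where "u' = swap_boxes i h u" and "v' = swap_boxes i h v"
    have "u' \<in> adg al" "v' \<in> adg al"
      using uv by (simp_all add: u'_def v'_def)
    moreover have "(\<exists>r < h. {u', v'} = {(Suc i, r), (i, Suc r)}) \<or> {u', v'} = {(Suc i, h), (Suc i, Suc h)}"
      using attacks_swap_boxes_cases[OF uv(3) False] unfolding u'_def v'_def .
    ultimately have "T u' \<noteq> T v'"
      using diag vert col_eq by (auto simp: doubleton_eq_iff adg_iff)
    then show ?thesis
      by (simp add: u'_def v'_def)
  qed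
qed

lemma nonattacking_Omega_if_path_prob:
  assumes na: "nonattacking al T" and h: "h \<le> col al i" and p: "path_prob al i T h \<noteq> 0"
  shows "nonattacking al (Omega i h T)"
proof (rule nonattacking_Omega[OF na h])
  show "\<forall>r<h. T (Suc i, r) \<noteq> T (i, Suc r)"
  proof (intro allI impI notI)
    fix r assume r: "r < h" and eq: "T (Suc i, r) = T (i, Suc r)"
    have "r < col al i" using r h by simp
    then have "distinct [T (i, r), T (Suc i, r), T (Suc i, Suc r)]"
      using eq nonattacking_row[OF na, of r] nonattacking_row[OF na, of "Suc r"]
        nonattacking_diag[OF na, of r] by auto
    then have "rho al i T r = 0"
      unfolding rho_eq_rho_loc[OF \<open>r < col al i\<close>] eq[symmetric] by (rule rho_loc_cross_repeat)
    then show False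
      using p r unfolding path_prob_def by auto
  qed
  show "h < col al i \<longrightarrow> T (Suc i, h) \<noteq> T (Suc i, Suc h)"
  proof (intro impI notI)
    assume h': "h < col al i" and eq: "T (Suc i, h) = T (Suc i, Suc h)"
    have "T (i, h) \<noteq> T (Suc i, h)" "T (i, Suc h) \<noteq> T (Suc i, h)"
      using nonattacking_row[OF na, of h] nonattacking_row[OF na, of "Suc h"] h' eq by auto
    then have "rho al i T h = 1"
      unfolding rho_eq_rho_loc[OF h'] eq[symmetric] by (rule rho_loc_right_repeat)
    then show False
      using p unfolding path_prob_def by simp
  qed
qed

lemma filling_Omega:
  assumes f: "filling al tau T" and len: "length tau = length al"
  shows "filling al (perm_si tau i) (Omega i h T)"
  unfolding filling_def Omega_eq_comp_swap_boxes
proof (intro conjI allI ballI impI)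
  fix u assume "u \<in> adg al"
  then show "(T \<circ> swap_boxes i h) u \<in> {1..length al}"
    using f unfolding filling_def by simp
next
  fix u assume "u \<notin> adg al"
  then have "swap_boxes i h u \<notin> adg al"
    by simp
  then show "(T \<circ> swap_boxes i h) u = 0"
    using f unfolding filling_def comp_apply by blast
next
  fix j assume j: "1 \<le> j \<and> j \<le> length al"
  have T0: "T (j', 0) = tau ! (j' - 1)" if "1 \<le> j'" "j' \<le> length al" for j'
    using f that unfolding filling_def col_def by auto
  show "(T \<circ> swap_boxes i h) (j, 0) = col (perm_si tau i) j"
    using j i_ge_1 i_less len T0[of i] T0[of "Suc i"] T0[of j]
    unfolding col_def perm_si_def by (auto simp: swap_boxes_def nth_list_update)
qed

lemma content_Omega: "content al (Omega i h T) = content al T"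
proof -
  have "{u \<in> dg al. T (swap_boxes i h u) = k} = swap_boxes i h ` {u \<in> dg al. T u = k}" for k
    by (auto intro!: image_eqI[where x = "swap_boxes i h _"])
  then show ?thesis
    unfolding content_def Omega_eq_comp_swap_boxes
    using card_image[OF inj_on_subset[OF inj_swap_boxes subset_UNIV]] by simp
qed

lemma Omega_mem_NAFc:
  assumes "T \<in> NAFc al tau beta" "length tau = length al" "h \<le> col al i" "path_prob al i T h \<noteq> 0"
  shows "Omega i h T \<in> NAFc al (perm_si tau i) beta"
  using assms nonattacking_Omega_if_path_prob filling_Omega content_Omega
  unfolding NAFc_def NAF_def by auto

lemma sum_Pi:
  assumes T: "T \<in> NAFc al tau beta" and len: "length tau = length al"
  shows "(\<Sum>U\<in>NAFc al (perm_si tau i) beta. Pi al i T U) = 1"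
proof -
  let ?S = "NAFc al (perm_si tau i) beta"
  define H where "H = {h. h \<le> col al i \<and> path_prob al i T h \<noteq> 0}"
  have na: "nonattacking al T"
    using T unfolding NAFc_def NAF_def by auto
  have sub: "(\<lambda>h. Omega i h T) ` H \<subseteq> ?S"
    using Omega_mem_NAFc[OF T len] unfolding H_def by auto
  have "(\<Sum>U\<in>?S. Pi al i T U) = (\<Sum>U\<in>(\<lambda>h. Omega i h T) ` H. Pi al i T U)"
  proof (rule sum.mono_neutral_right[OF finite_NAFc sub], rule ballI)
    fix U assume U: "U \<in> ?S - (\<lambda>h. Omega i h T) ` H"
    show "Pi al i T U = 0"
    proof (cases "\<exists>h \<le> col al i. U = Omega i h T")
      case True
      with U show ?thesis
        using Pi_Omega[OF na] unfolding H_def by auto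
    qed (rule Pi_not_Omega)
  qed
  also have "\<dots> = (\<Sum>h\<in>H. path_prob al i T h)"
    using Omega_eq_Omega_imp_eq[OF na] Pi_Omega[OF na]
    by (subst sum.reindex) (auto simp: inj_on_def H_def)
  also have "\<dots> = (\<Sum>h\<le>col al i. path_prob al i T h)"
    by (rule sum.mono_neutral_left) (auto simp: H_def)
  finally show ?thesis
    by (simp add: sum_path_prob)
qed

lemma wt_Pi_symmetric:
  assumes naT: "nonattacking al T" and naU: "nonattacking al U"
  shows "wt al T * Pi al i T U = wt al U * Pi al i U T"
proof (cases "\<exists>h \<le> col al i. U = Omega i h T")
  case True
  then obtain h where h: "h \<le> col al i" "U = Omega i h T" by blast
  then have T: "T = Omega i h U"
    by (simp add: Omega_Omega)
  have "wt al T * Pi al i T U = wt al T * path_prob al i T h"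
    using Pi_Omega[OF naT h(1)] h(2) by simp
  also have "\<dots> = wt al U * path_prob al i U h"
    using wt_path_prob_balance[OF naT _ h(1)] naU h(2) by (simp add: Omega_eq_comp_swap_boxes)
  also have "\<dots> = wt al U * Pi al i U T"
    using Pi_Omega[OF naU h(1)] T by simp
  finally show ?thesis .
next
  case False
  then have "\<not> (\<exists>h \<le> col al i. T = Omega i h U)"
    using Omega_Omega by metis
  with False show ?thesis
    by (simp add: Pi_not_Omega)
qed

end

theorem corollary3p12:
  fixes alpha sigma beta :: "nat list" and i :: nat
  assumes "is_perm (length alpha) sigma"
    and "1 \<le> i" and "i < length alpha"
    and "col alpha i = col alpha (i + 1)"
    and "length beta = length alpha"
  shows "prob_bij (NAFc alpha sigma beta) (NAFc alpha (perm_si sigma i) beta)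
           (wt alpha) (wt alpha) (Pi alpha i) (Pi alpha i)"
proof -
  interpret equal_columns alpha i
    using assms by unfold_locales auto
  have len: "length sigma = length alpha"
    using assms(1) distinct_card[of sigma] unfolding is_perm_def by simp
  then have len': "length (perm_si sigma i) = length alpha"
    unfolding perm_si_def by simp
  have "perm_si (perm_si sigma i) i = sigma"
    using perm_si_perm_si assms(2,3) len by simp
  then show ?thesis
    unfolding prob_bij_def
    using sum_Pi[OF _ len] sum_Pi[OF _ len', of _ beta] wt_Pi_symmetric
    unfolding NAFc_def NAF_def by auto
qed

end
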